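(* In any execution of \textsf{Murmur} (described in the context), if $\rho$ and $\pi$ are correct processes and $\rho$ is in $\pi$'s gossip sample, then $\pi$ is eventually in $\rho$'s gossip sample.
   Context: System model: a fixed set $\Pi$ of processes, some Byzantine and the rest correct, communicating asynchronously over reliable authenticated point-to-point links (every message between correct processes is eventually delivered after a finite delay); signatures cannot be forged. \textsf{Murmur} (parameter $G$): upon initialization each correct process samples $\bar G$ from a Poisson distribution with mean $G$, chooses $\bar G$ distinct processes uniformly at random as its initial gossip sample, and sends a GossipSubscribe message to each of them. A correct process modifies its gossip sample only at initialization and upon receiving a GossipSubscribe message from a process $\pi$, in which case it adds $\pi$ to its gossip sample (and, if it has already delivered a message, sends it a Gossip message carrying the delivered message and signature). Upon first obtaining a correctly signed message (by broadcasting it, for the sender, or by receiving a Gossip message with a valid sender signature), a correct process records it as delivered, forwards it in a Gossip message to every process in its gossip sample, and delivers it. *)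

theory Defs
  imports Main
begin

text \<open>Time is global and discrete (nat); processes do not have access to it.
  At each time step every correct process handles the messages it receives at that step;
  its local state at time Suc t results from its state at time t and those messages.\<close>

datatype ('m, 's) msg = GossipSubscribe | Gossip 'm 's

record ('p, 'm, 's) exec =
  init   :: "'p \<Rightarrow> 'p set"                         \<comment> \<open>initial gossip sample\<close>
  sample :: "'p \<Rightarrow> nat \<Rightarrow> 'p set"
  dlv    :: "'p \<Rightarrow> nat \<Rightarrow> ('m \<times> 's) option"
  sent   :: "nat \<Rightarrow> 'p \<Rightarrow> 'p \<Rightarrow> ('m, 's) msg \<Rightarrow> bool" \<comment> \<open>sent t p q m: p sends m to q at time t\<close>
  recv   :: "nat \<Rightarrow> 'p \<Rightarrow> 'p \<Rightarrow> ('m, 's) msg \<Rightarrow> bool" \<comment> \<open>recv t q p m: q receives m from p at time t\<close>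
  bcast  :: "nat \<Rightarrow> 'm \<times> 's \<Rightarrow> bool"               \<comment> \<open>the sender broadcasts (message, signature) at t\<close>

text \<open>Parameters: the process set Pi, the correct processes C, the designated sender sndr,
  and the signature check valid (valid x s: s is a valid signature of sndr on x).\<close>

definition murmur_exec ::
  "'p set \<Rightarrow> 'p set \<Rightarrow> 'p \<Rightarrow> ('m \<Rightarrow> 's \<Rightarrow> bool) \<Rightarrow> ('p, 'm, 's) exec \<Rightarrow> bool" where
  "murmur_exec Pi C sndr valid E \<longleftrightarrow>
     finite Pi \<and> C \<subseteq> Pi \<and> sndr \<in> Pi \<and>
     \<comment> \<open>messages only travel between processes of Pi\<close>
     (\<forall>t p q m. sent E t p q m \<longrightarrow> p \<in> Pi \<and> q \<in> Pi) \<and>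
     (\<forall>t q p m. recv E t q p m \<longrightarrow> p \<in> Pi \<and> q \<in> Pi) \<and>
     \<comment> \<open>reliable links: messages between correct processes are eventually delivered\<close>
     (\<forall>t p q m. p \<in> C \<longrightarrow> q \<in> C \<longrightarrow> sent E t p q m \<longrightarrow> (\<exists>t'\<ge>t. recv E t' q p m)) \<and>
     \<comment> \<open>authenticated links: a correct process receives m from p only if p sent it earlier\<close>
     (\<forall>t q p m. q \<in> C \<longrightarrow> recv E t q p m \<longrightarrow> (\<exists>t'\<le>t. sent E t' p q m)) \<and>
     \<comment> \<open>unforgeable signatures: if sndr is correct, validly signed messages originate from its broadcasts\<close>
     (sndr \<in> C \<longrightarrow> (\<forall>t p q x s. sent E t p q (Gossip x s) \<longrightarrow> valid x s \<longrightarrow>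
                      (\<exists>t'\<le>t. bcast E t' (x, s)))) \<and>
     \<comment> \<open>only the sender broadcasts, with a valid signature\<close>
     (\<forall>t x s. bcast E t (x, s) \<longrightarrow> valid x s) \<and>
     (sndr \<notin> C \<longrightarrow> (\<forall>t xs. \<not> bcast E t xs)) \<and>
     \<comment> \<open>behaviour of correct processes\<close>
     (\<forall>p\<in>C.
        finite (init E p) \<and> init E p \<subseteq> Pi \<and>
        sample E p 0 = init E p \<and>
        (\<forall>t. sample E p (Suc t) = sample E p t \<union> {q. recv E t p q GossipSubscribe}) \<and>
        \<comment> \<open>GossipSubscribe is sent only at initialization, to every member of the initial sample\<close>
        (\<forall>t q. sent E t p q GossipSubscribe \<longleftrightarrow> t = 0 \<and> q \<in> init E p) \<and>
        \<comment> \<open>delivery\<close>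
        dlv E p 0 = None \<and>
        (\<forall>t. dlv E p t \<noteq> None \<longrightarrow> dlv E p (Suc t) = dlv E p t) \<and>
        (\<forall>t x s. dlv E p t = None \<longrightarrow> dlv E p (Suc t) = Some (x, s) \<longrightarrow>
            (p = sndr \<and> bcast E t (x, s)) \<or>
            (valid x s \<and> (\<exists>q. recv E t p q (Gossip x s)))) \<and>
        (\<forall>t. dlv E p t = None \<longrightarrow>
            ((p = sndr \<and> (\<exists>xs. bcast E t xs)) \<or>
             (\<exists>q x s. valid x s \<and> recv E t p q (Gossip x s))) \<longrightarrow> dlv E p (Suc t) \<noteq> None) \<and>
        \<comment> \<open>Gossip messages: forward upon first delivery to the current sample; answer new subscribers\<close>
        (\<forall>t q x s. sent E t p q (Gossip x s) \<longleftrightarrow>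
            (dlv E p t = Some (x, s) \<and> recv E t p q GossipSubscribe) \<or>
            (dlv E p t = None \<and> dlv E p (Suc t) = Some (x, s) \<and> q \<in> sample E p (Suc t))))"

end

theory Submission
  imports Defs
begin

text \<open>Samples only grow by GossipSubscribe messages, and a correct process sends these only at
  initialization, to its initial sample. So if \<rho> is in \<pi>'s sample, either \<rho> was in \<pi>'s
  initial sample, and \<pi>'s GossipSubscribe eventually reaches \<rho> over the reliable link, or \<pi>
  received a GossipSubscribe from \<rho>, which by authentication \<rho> sent, so \<pi> was in \<rho>'s
  initial sample all along.\<close>

context
  fixes Pi C :: "'p set" and sndr :: 'p and valid :: "'m \<Rightarrow> 's \<Rightarrow> bool"
    and E :: "('p, 'm, 's) exec"
  assumes murmur: "murmur_exec Pi C sndr valid E"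
begin

lemma murmur_reliable_link:
  "p \<in> C \<Longrightarrow> q \<in> C \<Longrightarrow> sent E t p q m \<Longrightarrow> \<exists>t'\<ge>t. recv E t' q p m"
  using murmur unfolding murmur_exec_def by metis

lemma murmur_authenticated_link:
  "q \<in> C \<Longrightarrow> recv E t q p m \<Longrightarrow> \<exists>t'\<le>t. sent E t' p q m"
  using murmur unfolding murmur_exec_def by metis

lemma murmur_sample_0: "p \<in> C \<Longrightarrow> sample E p 0 = init E p"
  using murmur unfolding murmur_exec_def by metis

lemma murmur_sample_Suc:
  "p \<in> C \<Longrightarrow> sample E p (Suc t) = sample E p t \<union> {q. recv E t p q GossipSubscribe}"
  using murmur unfolding murmur_exec_def by metis

lemma murmur_sent_subscribe_iff:
  "p \<in> C \<Longrightarrow> sent E t p q GossipSubscribe \<longleftrightarrow> t = 0 \<and> q \<in> init E p"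
  using murmur unfolding murmur_exec_def by metis

lemma in_sample_imp_init_or_subscribed:
  assumes "p \<in> C" and "q \<in> sample E p t"
  shows "q \<in> init E p \<or> (\<exists>t0. recv E t0 p q GossipSubscribe)"
  using assms(2)
proof (induction t)
  case 0
  then show ?case using murmur_sample_0[OF assms(1)] by simp
next
  case (Suc t)
  then show ?case using murmur_sample_Suc[OF assms(1)] by auto
qed

lemma subscribe_recv_imp_in_init:
  assumes "p \<in> C" and "q \<in> C" and "recv E t p q GossipSubscribe"
  shows "p \<in> init E q"
proof -
  obtain t' where "sent E t' q p GossipSubscribe"
    using murmur_authenticated_link[OF assms(1,3)] by blast
  then show ?thesis using murmur_sent_subscribe_iff[OF assms(2)] by simp
qed

lemma in_sample_imp_in_init_either:
  assumes "p \<in> C" and "q \<in> C" and "q \<in> sample E p t"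
  shows "q \<in> init E p \<or> p \<in> init E q"
  using in_sample_imp_init_or_subscribed[OF assms(1,3)] subscribe_recv_imp_in_init[OF assms(1,2)]
  by blast

lemma in_init_imp_eventually_sampled:
  assumes "p \<in> C" and "q \<in> C" and "q \<in> init E p"
  shows "\<exists>t. p \<in> sample E q t"
proof -
  have "sent E 0 p q GossipSubscribe"
    using murmur_sent_subscribe_iff[OF assms(1)] assms(3) by simp
  then obtain t where "recv E t q p GossipSubscribe"
    using murmur_reliable_link[OF assms(1,2)] by blast
  then have "p \<in> sample E q (Suc t)"
    using murmur_sample_Suc[OF assms(2)] by simp
  then show ?thesis by blast
qed

end

theorem lemma1:
  fixes Pi C :: "'p set" and sndr :: 'p and valid :: "'m \<Rightarrow> 's \<Rightarrow> bool"
    and E :: "('p, 'm, 's) exec" and \<rho> \<pi> :: 'p and t :: nat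
  assumes "murmur_exec Pi C sndr valid E"
    and "\<rho> \<in> C" and "\<pi> \<in> C"
    and "\<rho> \<in> sample E \<pi> t"
  shows "\<exists>t'. \<pi> \<in> sample E \<rho> t'"
proof -
  from in_sample_imp_in_init_either[OF assms(1,3,2,4)]
  consider "\<rho> \<in> init E \<pi>" | "\<pi> \<in> init E \<rho>" by blast
  then show ?thesis
  proof cases
    case 1
    then show ?thesis using in_init_imp_eventually_sampled[OF assms(1,3,2)] by blast
  next
    case 2
    then have "\<pi> \<in> sample E \<rho> 0" using murmur_sample_0[OF assms(1,2)] by simp
    then show ?thesis by blast
  qed
qed

end
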